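(* Let $G$ be a graph with length-function $\ell$, let $k$ be a natural number and let $H\subseteq G$. If $H$ is not $k$-geodesic in $G$, then $G$ contains a subgraph $T$ which is a tree with at most $k$ leaves and which, with respect to the restriction of $\ell$ to $T\cup H$, is a shortcut tree for $H$.
   Context: All graphs are finite; parallel edges are allowed, loops are not. A length-function on a graph $G$ is a map $\ell:E(G)\to\mathbb{R}^+$ (strictly positive reals); for a subgraph $H$ put $\ell(H)=\sum_{e\in E(H)}\ell(e)$, and subgraphs carry the restricted length-function. For $A\subseteq V(G)$, the Steiner distance $\mathrm{sd}_G(A)$ is the minimum of $\ell(S)$ over all connected subgraphs $S\subseteq G$ with $A\subseteq V(S)$ ($\infty$ if none exists). A subgraph $H\subseteq G$ is $k$-geodesic in $G$ if $\mathrm{sd}_H(A)=\mathrm{sd}_G(A)$ for every $A\subseteq V(H)$ with $|A|\le k$. $L(T)$ denotes the set of leaves of a tree $T$. Shortcut tree: let $H$ be a graph, $T$ a tree, both subgraphs of the graph $T\cup H$, and $\ell$ a length-function on $T\cup H$. Then $T$ is a shortcut tree for $H$ if (SCT1) $V(T)\cap V(H)=L(T)$; (SCT2) $E(T)\cap E(H)=\emptyset$; (SCT3) $\ell(T)<\mathrm{sd}_H(L(T))$; (SCT4) for every proper subset $B\subsetneq L(T)$ we have $\mathrm{sd}_H(B)\le \mathrm{sd}_T(B)$. *)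

theory Defs
  imports Complex_Main "HOL-Library.Extended_Real"
begin

text \<open>A graph is a pair
(V, E) of a vertex set and an edge set; all graphs considered are subgraphs of
one ambient graph and share the incidence map, so parallel edges are distinct
edge objects with equal incidence sets.\<close>

definition graph :: "('e \<Rightarrow> 'v set) \<Rightarrow> 'v set \<Rightarrow> 'e set \<Rightarrow> bool" where
  "graph inc V E \<longleftrightarrow> finite V \<and> finite E \<and> (\<forall>e\<in>E. inc e \<subseteq> V \<and> card (inc e) = 2)"

definition subgraph :: "('e \<Rightarrow> 'v set) \<Rightarrow> 'v set \<Rightarrow> 'e set \<Rightarrow> 'v set \<Rightarrow> 'e set \<Rightarrow> bool" where
  "subgraph inc V' E' V E \<longleftrightarrow> V' \<subseteq> V \<and> E' \<subseteq> E \<and> (\<forall>e\<in>E'. inc e \<subseteq> V')"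

definition adj :: "('e \<Rightarrow> 'v set) \<Rightarrow> 'e set \<Rightarrow> 'v \<Rightarrow> 'v \<Rightarrow> bool" where
  "adj inc E x y \<longleftrightarrow> (\<exists>e\<in>E. inc e = {x, y})"

text \<open>Connected graphs are nonempty (Diestel's convention).\<close>
definition connected_graph :: "('e \<Rightarrow> 'v set) \<Rightarrow> 'v set \<Rightarrow> 'e set \<Rightarrow> bool" where
  "connected_graph inc V E \<longleftrightarrow> V \<noteq> {} \<and> (\<forall>x\<in>V. \<forall>y\<in>V. (adj inc E)\<^sup>*\<^sup>* x y)"

text \<open>A tree is a minimally connected graph: connected, and deleting any edge
disconnects it (equivalently, connected and without cycles).\<close>
definition is_tree :: "('e \<Rightarrow> 'v set) \<Rightarrow> 'v set \<Rightarrow> 'e set \<Rightarrow> bool" where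
  "is_tree inc V E \<longleftrightarrow> connected_graph inc V E \<and> (\<forall>e\<in>E. \<not> connected_graph inc V (E - {e}))"

definition leaves :: "('e \<Rightarrow> 'v set) \<Rightarrow> 'v set \<Rightarrow> 'e set \<Rightarrow> 'v set" where
  "leaves inc V E = {v\<in>V. card {e\<in>E. v \<in> inc e} = 1}"

definition glen :: "('e \<Rightarrow> real) \<Rightarrow> 'e set \<Rightarrow> real" where
  "glen l E = (\<Sum>e\<in>E. l e)"

text \<open>Steiner distance; the infimum over the empty set is \<infinity>.\<close>
definition sd :: "('e \<Rightarrow> 'v set) \<Rightarrow> ('e \<Rightarrow> real) \<Rightarrow> 'v set \<Rightarrow> 'e set \<Rightarrow> 'v set \<Rightarrow> ereal" where
  "sd inc l V E A =
     (INF S \<in> {(V', E'). subgraph inc V' E' V E \<and> connected_graph inc V' E' \<and> A \<subseteq> V'}.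
        ereal (glen l (snd S)))"

definition k_geodesic ::
  "('e \<Rightarrow> 'v set) \<Rightarrow> ('e \<Rightarrow> real) \<Rightarrow> nat \<Rightarrow> 'v set \<Rightarrow> 'e set \<Rightarrow> 'v set \<Rightarrow> 'e set \<Rightarrow> bool" where
  "k_geodesic inc l k VH EH VG EG \<longleftrightarrow>
     (\<forall>A. A \<subseteq> VH \<and> card A \<le> k \<longrightarrow> sd inc l VH EH A = sd inc l VG EG A)"

definition shortcut_tree ::
  "('e \<Rightarrow> 'v set) \<Rightarrow> ('e \<Rightarrow> real) \<Rightarrow> 'v set \<Rightarrow> 'e set \<Rightarrow> 'v set \<Rightarrow> 'e set \<Rightarrow> bool" where
  "shortcut_tree inc l VT ET VH EH \<longleftrightarrow>
     is_tree inc VT ET \<and>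
     VT \<inter> VH = leaves inc VT ET \<and>
     ET \<inter> EH = {} \<and>
     ereal (glen l ET) < sd inc l VH EH (leaves inc VT ET) \<and>
     (\<forall>B. B \<subset> leaves inc VT ET \<longrightarrow> sd inc l VH EH B \<le> sd inc l VT ET B)"

end

theory Submission
  imports Defs
begin

text \<open>Among all connected subgraphs T of G that connect some set A of at most k vertices of H
more cheaply than H does, choose one with the fewest vertices plus edges. Minimality says that
every proper connected subgraph of T spanning a set A' of at most k vertices of H costs at least
the Steiner distance of A' in H. Deleting a non-bridge edge or a leaf outside A would give a
cheaper connector of A, so T is a tree whose leaves lie in A. If a vertex v of T that lies in H
had degree 0 or at least 2, splitting T at v into two proper subtrees and joining the two cheap
Steiner trees in H through v would connect A in H within the length of T; an edge of T that lies
in H would force T to be that single edge. Hence V(T) \<inter> V(H) = A = L(T), and (SCT4) follows by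
applying minimality to an optimal Steiner tree of a proper subset of L(T) inside T, which is
proper because a leaf can be cut off.\<close>

abbreviation reach :: "('e \<Rightarrow> 'v set) \<Rightarrow> 'e set \<Rightarrow> 'v \<Rightarrow> 'v \<Rightarrow> bool" where
  "reach inc E \<equiv> (adj inc E)\<^sup>*\<^sup>*"

abbreviation component :: "('e \<Rightarrow> 'v set) \<Rightarrow> 'e set \<Rightarrow> 'v \<Rightarrow> 'v set" where
  "component inc E x \<equiv> {y. reach inc E x y}"

abbreviation edges_within :: "('e \<Rightarrow> 'v set) \<Rightarrow> 'e set \<Rightarrow> 'v set \<Rightarrow> 'e set" where
  "edges_within inc E C \<equiv> {f\<in>E. inc f \<subseteq> C}"

lemma adj_sym: "adj inc E x y \<Longrightarrow> adj inc E y x"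
  by (auto simp: adj_def insert_commute)

lemma reach_sym: "reach inc E x y \<Longrightarrow> reach inc E y x"
  by (induction rule: rtranclp_induct) (auto intro: converse_rtranclp_into_rtranclp adj_sym)

lemma reach_mono:
  assumes "E \<subseteq> E'" "reach inc E x y"
  shows "reach inc E' x y"
proof -
  have "adj inc E \<le> adj inc E'" using assms(1) unfolding adj_def by blast
  then show ?thesis using assms(2) rtranclp_mono by blast
qed

lemma reach_closed: "reach inc E x y \<Longrightarrow> \<forall>f\<in>E. inc f \<subseteq> V \<Longrightarrow> x \<in> V \<Longrightarrow> y \<in> V"
  by (induction rule: rtranclp_induct) (auto simp: adj_def)

lemma reach_from_isolated: "\<forall>f\<in>E. x \<notin> inc f \<Longrightarrow> reach inc E x y \<Longrightarrow> y = x"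
  by (erule rtranclp_induct) (auto simp: adj_def)

lemma reach_within_component:
  assumes "reach inc E x y"
  shows "reach inc (edges_within inc E (component inc E x)) x y"
  using assms
proof (induction rule: rtranclp_induct)
  case (step y z)
  from step.hyps(2) obtain f where f: "f \<in> E" "inc f = {y, z}" by (auto simp: adj_def)
  have "reach inc E x z" using step.hyps by (rule rtranclp.rtrancl_into_rtrancl)
  then have "inc f \<subseteq> component inc E x" using f step.hyps(1) by simp
  with f have "adj inc (edges_within inc E (component inc E x)) y z"
    unfolding adj_def by blast
  with step.IH show ?case by (rule rtranclp.rtrancl_into_rtrancl)
qed simp

lemma connected_component:
  "connected_graph inc (component inc E x) (edges_within inc E (component inc E x))"
  unfolding connected_graph_def
proof (intro conjI ballI)
  fix a b assume "a \<in> component inc E x" "b \<in> component inc E x"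
  then have "reach inc (edges_within inc E (component inc E x)) x a"
    "reach inc (edges_within inc E (component inc E x)) x b"
    using reach_within_component by auto
  then show "reach inc (edges_within inc E (component inc E x)) a b"
    by (meson reach_sym rtranclp_trans)
qed auto

lemma connected_Un:
  assumes "connected_graph inc V1 E1" "connected_graph inc V2 E2" "v \<in> V1" "v \<in> V2"
  shows "connected_graph inc (V1 \<union> V2) (E1 \<union> E2)"
  unfolding connected_graph_def
proof (intro conjI ballI)
  have to_v: "reach inc (E1 \<union> E2) z v" if "z \<in> V1 \<union> V2" for z
  proof (cases "z \<in> V1")
    case True
    then have "reach inc E1 z v" using assms unfolding connected_graph_def by auto
    then show ?thesis by (rule reach_mono[rotated]) auto
  next
    case False
    then have "reach inc E2 z v" using that assms unfolding connected_graph_def by auto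
    then show ?thesis by (rule reach_mono[rotated]) auto
  qed
  fix x y assume "x \<in> V1 \<union> V2" "y \<in> V1 \<union> V2"
  then show "reach inc (E1 \<union> E2) x y"
    using to_v reach_sym by (meson rtranclp_trans)
qed (use assms in auto)

lemma connected_edge:
  assumes "inc e = {u, w}"
  shows "connected_graph inc {u, w} {e}"
  unfolding connected_graph_def
proof (intro conjI ballI)
  fix a b assume "a \<in> {u, w}" "b \<in> {u, w}"
  moreover have "adj inc {e} u w" "adj inc {e} w u"
    using assms by (auto simp: adj_def insert_commute)
  ultimately show "reach inc {e} a b" by auto
qed auto

lemma graph_subgraph: "graph inc V E \<Longrightarrow> subgraph inc V' E' V E \<Longrightarrow> graph inc V' E'"
  by (auto simp: graph_def subgraph_def intro: finite_subset)

lemma graph_edgeE: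
  assumes "graph inc V E" "f \<in> E"
  obtains u w where "inc f = {u, w}" "u \<noteq> w" "u \<in> V" "w \<in> V"
  using assms unfolding graph_def by (metis card_2_iff insert_subset)

lemma graph_edge_at:
  assumes "graph inc V E" "f \<in> E" "v \<in> inc f"
  obtains w where "inc f = {v, w}" "v \<noteq> w" "w \<in> V"
proof -
  obtain u w where uw: "inc f = {u, w}" "u \<noteq> w" "u \<in> V" "w \<in> V"
    using graph_edgeE[OF assms(1,2)] .
  show ?thesis
  proof (cases "v = u")
    case True
    then show ?thesis using that uw by blast
  next
    case False
    then have "inc f = {v, u}" using assms(3) uw by auto
    then show ?thesis using that uw False by blast
  qed
qed

lemma graph_edge_not_loop: "graph inc V E \<Longrightarrow> f \<in> E \<Longrightarrow> \<not> inc f \<subseteq> {v}"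
  by (erule graph_edgeE) auto

lemma connected_isolated_vertex:
  assumes G: "graph inc V E" and "connected_graph inc V E" "v \<in> V" "\<forall>f\<in>E. v \<notin> inc f"
  shows "V = {v}" "E = {}"
proof -
  have "y = v" if "y \<in> V" for y
  proof -
    have "reach inc E v y" using assms(2,3) that unfolding connected_graph_def by blast
    then show ?thesis by (rule reach_from_isolated[OF assms(4)])
  qed
  then show V: "V = {v}" using assms(3) by blast
  have "inc f \<subseteq> {v}" if "f \<in> E" for f using G that V by (auto simp: graph_def)
  then show "E = {}" using graph_edge_not_loop[OF G] by blast
qed

lemma bridge_split:
  assumes G: "graph inc V E" and conn: "connected_graph inc V E" and eE: "e \<in> E"
    and nconn: "\<not> connected_graph inc V (E - {e})" and inc_e: "inc e = {u, w}"
  shows "V = component inc (E - {e}) u \<union> component inc (E - {e}) w"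
    and "component inc (E - {e}) u \<inter> component inc (E - {e}) w = {}"
    and "\<forall>f\<in>E - {e}. inc f \<subseteq> component inc (E - {e}) u \<or> inc f \<subseteq> component inc (E - {e}) w"
proof -
  let ?R = "reach inc (E - {e})"
  have uV: "u \<in> V" and wV: "w \<in> V" and sub: "\<forall>f\<in>E - {e}. inc f \<subseteq> V"
    using G eE inc_e by (auto simp: graph_def)
  have cov: "?R u y \<or> ?R w y" if "y \<in> V" for y
  proof -
    have "reach inc E u y" using conn uV that unfolding connected_graph_def by auto
    then show ?thesis
    proof (induction rule: rtranclp_induct)
      case (step y z)
      from step.hyps(2) obtain f where f: "f \<in> E" "inc f = {y, z}" by (auto simp: adj_def)
      show ?case
      proof (cases "f = e")
        case True
        then show ?thesis using f inc_e by (metis doubleton_eq_iff insert_iff rtranclp.rtrancl_refl)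
      next
        case False
        then have "adj inc (E - {e}) y z" using f by (auto simp: adj_def)
        then show ?thesis using step.IH by (meson rtranclp.rtrancl_into_rtrancl)
      qed
    qed simp
  qed
  show "V = component inc (E - {e}) u \<union> component inc (E - {e}) w"
    using cov reach_closed[OF _ sub uV] reach_closed[OF _ sub wV] by blast
  show "component inc (E - {e}) u \<inter> component inc (E - {e}) w = {}"
  proof (rule ccontr)
    assume "component inc (E - {e}) u \<inter> component inc (E - {e}) w \<noteq> {}"
    then have "?R u w" by (blast intro: reach_sym rtranclp_trans)
    then have "?R u y" if "y \<in> V" for y using cov[OF that] by (meson rtranclp_trans)
    then have "connected_graph inc V (E - {e})"
      using conn unfolding connected_graph_def by (meson reach_sym rtranclp_trans)
    with nconn show False by simp
  qed
  show "\<forall>f\<in>E - {e}. inc f \<subseteq> component inc (E - {e}) u \<or> inc f \<subseteq> component inc (E - {e}) w"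
  proof
    fix f assume f: "f \<in> E - {e}"
    then obtain a b where ab: "inc f = {a, b}" "a \<in> V" using G by (auto elim: graph_edgeE)
    have "adj inc (E - {e}) a b" using f ab by (auto simp: adj_def)
    then have "?R x a \<Longrightarrow> ?R x b" for x by (meson rtranclp.rtrancl_into_rtrancl)
    then show "inc f \<subseteq> component inc (E - {e}) u \<or> inc f \<subseteq> component inc (E - {e}) w"
      using cov[OF \<open>a \<in> V\<close>] ab by auto
  qed
qed

lemma leaf_edge_unique:
  assumes "v \<in> leaves inc V E" "e \<in> E" "v \<in> inc e" "f \<in> E" "v \<in> inc f"
  shows "f = e"
proof -
  have "card {f\<in>E. v \<in> inc f} = 1" using assms(1) by (simp add: leaves_def)
  then obtain x where x: "{f\<in>E. v \<in> inc f} = {x}" by (rule card_1_singletonE)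
  have "e \<in> {f\<in>E. v \<in> inc f}" "f \<in> {f\<in>E. v \<in> inc f}" using assms(2-5) by auto
  then show ?thesis unfolding x by simp
qed

lemma tree_remove_leaf:
  assumes G: "graph inc V E" and tree: "is_tree inc V E" and v: "v \<in> leaves inc V E"
  obtains e where "e \<in> E" "v \<in> inc e"
    "connected_graph inc (V - {v}) (E - {e})" "\<forall>f\<in>E - {e}. inc f \<subseteq> V - {v}"
proof -
  have "card {f\<in>E. v \<in> inc f} = 1" using v by (simp add: leaves_def)
  then obtain e where "{f\<in>E. v \<in> inc f} = {e}" by (rule card_1_singletonE)
  then have eE: "e \<in> E" and ve: "v \<in> inc e" and isolated: "\<forall>f\<in>E - {e}. v \<notin> inc f" by auto
  obtain w where inc_e: "inc e = {v, w}" using G eE ve by (rule graph_edge_at)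
  have conn: "connected_graph inc V E" and nconn: "\<not> connected_graph inc V (E - {e})"
    using tree eE unfolding is_tree_def by auto
  note S = bridge_split[OF G conn eE nconn inc_e]
  have Cv: "component inc (E - {e}) v = {v}"
    using reach_from_isolated[OF isolated] by auto
  have Cw: "component inc (E - {e}) w = V - {v}" using S(1,2) Cv by auto
  have within: "\<forall>f\<in>E - {e}. inc f \<subseteq> V - {v}"
    using S(3) Cv Cw graph_edge_not_loop[OF G] by fastforce
  have "edges_within inc (E - {e}) (component inc (E - {e}) w) = E - {e}" using within Cw by auto
  then have "connected_graph inc (V - {v}) (E - {e})" using connected_component Cw by metis
  then show ?thesis using that eE ve within by blast
qed

lemma tree_edge_between_leaves:
  assumes G: "graph inc V E" and tree: "is_tree inc V E" and eE: "e \<in> E"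
    and leaves: "inc e \<subseteq> leaves inc V E"
  shows "V = inc e" "E = {e}"
proof -
  obtain u w where uw: "inc e = {u, w}" "u \<noteq> w" "u \<in> V" "w \<in> V"
    using G eE by (rule graph_edgeE)
  have uL: "u \<in> leaves inc V E" and wL: "w \<in> leaves inc V E" using leaves uw by auto
  obtain e0 where e0: "e0 \<in> E" "u \<in> inc e0" "connected_graph inc (V - {u}) (E - {e0})"
    "\<forall>f\<in>E - {e0}. inc f \<subseteq> V - {u}"
    by (rule tree_remove_leaf[OF G tree uL])
  have "e0 = e" using leaf_edge_unique[OF uL eE _ e0(1,2)] uw by simp
  have "w \<notin> inc f" if "f \<in> E - {e0}" for f
    using leaf_edge_unique[OF wL eE _ ] that uw \<open>e0 = e\<close> by auto
  moreover have "graph inc (V - {u}) (E - {e0})"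
    using G e0(4) by (auto simp: graph_def)
  moreover have "w \<in> V - {u}" using uw by simp
  ultimately have "V - {u} = {w}" "E - {e0} = {}"
    using connected_isolated_vertex[OF _ e0(3)] by blast+
  then show "V = inc e" "E = {e}" using uw eE \<open>e0 = e\<close> by auto
qed

text \<open>One side is the component of v after deleting an edge e = vw, the other is e together with
the component of w.\<close>

lemma tree_split_at_vertex:
  assumes G: "graph inc V E" and tree: "is_tree inc V E"
    and deg: "card {f\<in>E. v \<in> inc f} \<ge> 2"
  obtains V1 E1 V2 E2 where "V1 \<union> V2 = V" "E1 \<union> E2 = E" "E1 \<inter> E2 = {}" "E1 \<noteq> {}" "E2 \<noteq> {}"
    "connected_graph inc V1 E1" "connected_graph inc V2 E2"
    "\<forall>f\<in>E1. inc f \<subseteq> V1" "\<forall>f\<in>E2. inc f \<subseteq> V2" "v \<in> V1" "v \<in> V2"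
proof -
  let ?D = "{f\<in>E. v \<in> inc f}"
  have fin: "finite ?D" using G by (simp add: graph_def)
  have "\<not> card ?D \<le> Suc 0" using deg by simp
  then obtain e e' where ee: "e \<in> ?D" "e' \<in> ?D" "e \<noteq> e'"
    unfolding card_le_Suc0_iff_eq[OF fin] by blast
  then have eE: "e \<in> E" and "v \<in> inc e" and e'E: "e' \<in> E" and ve': "v \<in> inc e'" by auto
  obtain w where inc_e: "inc e = {v, w}" using G eE \<open>v \<in> inc e\<close> by (rule graph_edge_at)
  have conn: "connected_graph inc V E" and nconn: "\<not> connected_graph inc V (E - {e})"
    using tree eE unfolding is_tree_def by auto
  note S = bridge_split[OF G conn eE nconn inc_e]
  define Cv where "Cv = component inc (E - {e}) v"
  define Cw where "Cw = component inc (E - {e}) w"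
  define E1 where "E1 = edges_within inc (E - {e}) Cv"
  define Ew where "Ew = edges_within inc (E - {e}) Cw"
  have VCC: "V = Cv \<union> Cw" and disj: "Cv \<inter> Cw = {}"
    and cover: "\<forall>f\<in>E - {e}. inc f \<subseteq> Cv \<or> inc f \<subseteq> Cw"
    using S by (simp_all add: Cv_def Cw_def)
  have vCv: "v \<in> Cv" and wCw: "w \<in> Cw" by (simp_all add: Cv_def Cw_def)
  have not_both: "\<not> inc f \<subseteq> Cv \<inter> Cw" if "f \<in> E" for f
    using graph_edge_not_loop[OF G that, of v] unfolding disj by auto
  have "\<not> inc e' \<subseteq> Cw" using ve' vCv disj by blast
  then have "e' \<in> E1" using e'E ee(3) cover unfolding E1_def by blast
  show ?thesis
  proof (rule that[of Cv "Cw \<union> {v, w}" E1 "Ew \<union> {e}"])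
    show "connected_graph inc Cv E1"
      unfolding Cv_def E1_def by (rule connected_component)
    have "connected_graph inc Cw Ew"
      unfolding Cw_def Ew_def by (rule connected_component)
    then show "connected_graph inc (Cw \<union> {v, w}) (Ew \<union> {e})"
      by (rule connected_Un[OF _ connected_edge[of inc e v w, OF inc_e] wCw]) simp
    show "E1 \<union> (Ew \<union> {e}) = E" using cover eE by (auto simp: E1_def Ew_def)
    show "E1 \<inter> (Ew \<union> {e}) = {}" using not_both by (auto simp: E1_def Ew_def)
    show "\<forall>f\<in>E1. inc f \<subseteq> Cv" "\<forall>f\<in>Ew \<union> {e}. inc f \<subseteq> Cw \<union> {v, w}"
      using inc_e by (auto simp: E1_def Ew_def)
    show "Cv \<union> (Cw \<union> {v, w}) = V" using VCC vCv wCw by blast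
    show "E1 \<noteq> {}" using \<open>e' \<in> E1\<close> by blast
  qed (use vCv in auto)
qed

lemma glen_mono: "finite E \<Longrightarrow> E' \<subseteq> E \<Longrightarrow> \<forall>f\<in>E. l f \<ge> 0 \<Longrightarrow> glen l E' \<le> glen l E"
  unfolding glen_def by (rule sum_mono2) auto

lemma glen_Un_le:
  assumes "finite E1" "finite E2" "\<forall>f\<in>E1. l f \<ge> 0"
  shows "glen l (E1 \<union> E2) \<le> glen l E1 + glen l E2"
proof -
  have "sum l (E1 \<union> E2) = sum l E1 + sum l E2 - sum l (E1 \<inter> E2)"
    using assms by (simp add: sum_Un)
  moreover have "sum l (E1 \<inter> E2) \<ge> 0" using assms by (intro sum_nonneg) auto
  ultimately show ?thesis unfolding glen_def by simp
qed

lemma sd_le_glen: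
  assumes "subgraph inc V' E' V E" "connected_graph inc V' E'" "A \<subseteq> V'"
  shows "sd inc l V E A \<le> ereal (glen l E')"
  unfolding sd_def by (rule INF_lower2[of "(V', E')"]) (use assms in auto)

lemma sd_mono: "A \<subseteq> A' \<Longrightarrow> sd inc l V E A \<le> sd inc l V E A'"
  unfolding sd_def by (rule INF_superset_mono) auto

lemma sd_subgraph_le: "subgraph inc VH EH VG EG \<Longrightarrow> sd inc l VG EG A \<le> sd inc l VH EH A"
  unfolding sd_def by (rule INF_superset_mono) (auto simp: subgraph_def)

lemma sd_attained:
  assumes "finite V" "finite E" "sd inc l V E A \<noteq> \<infinity>"
  obtains V' E' where "subgraph inc V' E' V E" "connected_graph inc V' E'" "A \<subseteq> V'"
    "sd inc l V E A = ereal (glen l E')"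
proof -
  let ?F = "{(V', E'). subgraph inc V' E' V E \<and> connected_graph inc V' E' \<and> A \<subseteq> V'}"
  let ?g = "\<lambda>S. ereal (glen l (snd S))"
  have "?F \<subseteq> Pow V \<times> Pow E" by (auto simp: subgraph_def)
  then have fin: "finite ?F" using assms(1,2) by (simp add: finite_subset)
  have ne: "?F \<noteq> {}"
  proof
    assume "?F = {}"
    then have "sd inc l V E A = \<infinity>" unfolding sd_def \<open>?F = {}\<close> by (simp add: top_ereal_def)
    with assms(3) show False by simp
  qed
  have "sd inc l V E A = Min (?g ` ?F)" unfolding sd_def using fin ne by (simp add: Min_Inf)
  moreover have "Min (?g ` ?F) \<in> ?g ` ?F" using fin ne by (intro Min_in) auto
  ultimately show ?thesis using that by force
qed

lemma sd_Un_le: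
  assumes fin: "finite V" "finite E" and nonneg: "\<forall>f\<in>E. l f \<ge> 0"
    and A1: "sd inc l V E A1 \<le> ereal a" and A2: "sd inc l V E A2 \<le> ereal b"
    and common: "A1 \<inter> A2 \<noteq> {}"
  shows "sd inc l V E (A1 \<union> A2) \<le> ereal (a + b)"
proof -
  have "sd inc l V E A1 \<noteq> \<infinity>" using A1 by auto
  then obtain V1 E1 where S1: "subgraph inc V1 E1 V E" "connected_graph inc V1 E1" "A1 \<subseteq> V1"
    "sd inc l V E A1 = ereal (glen l E1)"
    by (rule sd_attained[OF fin])
  have "sd inc l V E A2 \<noteq> \<infinity>" using A2 by auto
  then obtain V2 E2 where S2: "subgraph inc V2 E2 V E" "connected_graph inc V2 E2" "A2 \<subseteq> V2"
    "sd inc l V E A2 = ereal (glen l E2)"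
    by (rule sd_attained[OF fin])
  obtain v where "v \<in> V1" "v \<in> V2" using common S1(3) S2(3) by blast
  then have conn: "connected_graph inc (V1 \<union> V2) (E1 \<union> E2)" by (rule connected_Un[OF S1(2) S2(2)])
  have sub: "subgraph inc (V1 \<union> V2) (E1 \<union> E2) V E" using S1(1) S2(1) by (auto simp: subgraph_def)
  have "sd inc l V E (A1 \<union> A2) \<le> ereal (glen l (E1 \<union> E2))"
    using S1(3) S2(3) by (intro sd_le_glen[OF sub conn]) blast
  also have "\<dots> \<le> ereal (glen l E1 + glen l E2)"
  proof -
    have "E1 \<subseteq> E" "E2 \<subseteq> E" using S1(1) S2(1) by (simp_all add: subgraph_def)
    then show ?thesis using glen_Un_le[of E1 E2 l] finite_subset[OF _ fin(2)] nonneg by auto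
  qed
  also have "\<dots> \<le> ereal (a + b)" using A1 A2 S1(4) S2(4) by simp
  finally show ?thesis .
qed

lemma card_insert_Int_le:
  assumes "finite A" "\<not> A \<subseteq> B"
  shows "card (insert v (A \<inter> B)) \<le> card A"
proof -
  have "card (A \<inter> B) < card A" using assms by (intro psubset_card_mono) auto
  moreover have "card (insert v (A \<inter> B)) \<le> Suc (card (A \<inter> B))"
    using assms(1) by (simp add: card_insert_if)
  ultimately show ?thesis by linarith
qed

definition short_connector ::
  "('e \<Rightarrow> 'v set) \<Rightarrow> ('e \<Rightarrow> real) \<Rightarrow> nat \<Rightarrow> 'v set \<Rightarrow> 'e set \<Rightarrow> 'v set \<Rightarrow> 'e set
     \<Rightarrow> 'v set \<Rightarrow> 'v set \<Rightarrow> 'e set \<Rightarrow> bool" where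
  "short_connector inc l k VG EG VH EH A V E \<longleftrightarrow>
     A \<subseteq> VH \<and> card A \<le> k \<and> subgraph inc V E VG EG \<and> connected_graph inc V E \<and> A \<subseteq> V \<and>
     ereal (glen l E) < sd inc l VH EH A"

lemma short_connector_if_not_k_geodesic:
  assumes "subgraph inc VH EH VG EG" "\<not> k_geodesic inc l k VH EH VG EG"
  obtains A V E where "short_connector inc l k VG EG VH EH A V E"
proof -
  obtain A where A: "A \<subseteq> VH" "card A \<le> k" "sd inc l VH EH A \<noteq> sd inc l VG EG A"
    using assms(2) unfolding k_geodesic_def by blast
  have "sd inc l VG EG A < sd inc l VH EH A"
    using order_le_neq_trans[OF sd_subgraph_le[OF assms(1)] not_sym[OF A(3)]] .
  then obtain V E where "subgraph inc V E VG EG" "connected_graph inc V E" "A \<subseteq> V"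
    "ereal (glen l E) < sd inc l VH EH A"
    unfolding sd_def[of inc l VG EG] INF_less_iff by auto
  with A that show ?thesis unfolding short_connector_def by blast
qed

lemma ex_minimal_short_connector:
  assumes G: "graph inc VG EG" and "short_connector inc l k VG EG VH EH A0 V0 E0"
  obtains A V E where "short_connector inc l k VG EG VH EH A V E"
    "\<And>A' V' E'. short_connector inc l k VG EG VH EH A' V' E' \<Longrightarrow> V' \<subseteq> V \<Longrightarrow> E' \<subseteq> E \<Longrightarrow>
       V' = V \<and> E' = E"
proof -
  let ?P = "\<lambda>(A, V, E). short_connector inc l k VG EG VH EH A V E"
  let ?size = "\<lambda>(A :: 'v set, V :: 'v set, E :: 'e set). card V + card E"
  obtain X where X: "?P X" and least: "\<And>Y. ?P Y \<Longrightarrow> ?size X \<le> ?size Y"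
    using ex_has_least_nat[of ?P "(A0, V0, E0)" ?size] assms(2) by auto
  obtain A V E where X_eq: "X = (A, V, E)" by (cases X)
  have short: "short_connector inc l k VG EG VH EH A V E" using X X_eq by simp
  then have "graph inc V E" using graph_subgraph[OF G] by (simp add: short_connector_def)
  then have fin: "finite V" "finite E" by (simp_all add: graph_def)
  have "V' = V \<and> E' = E"
    if short': "short_connector inc l k VG EG VH EH A' V' E'" and sub: "V' \<subseteq> V" "E' \<subseteq> E"
    for A' V' E'
  proof (rule ccontr)
    assume "\<not> (V' = V \<and> E' = E)"
    then have "card V' < card V \<or> card E' < card E"
      using sub fin by (auto intro: psubset_card_mono)
    moreover have "card V' \<le> card V" "card E' \<le> card E" using sub fin by (simp_all add: card_mono)
    moreover have "card V + card E \<le> card V' + card E'"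
      using least[of "(A', V', E')"] short' X_eq by simp
    ultimately show False by linarith
  qed
  with short that show ?thesis by blast
qed

locale minimal_short_connector =
  fixes inc :: "'e \<Rightarrow> 'v set" and l :: "'e \<Rightarrow> real" and k :: nat
    and VG VH VT A :: "'v set" and EG EH ET :: "'e set"
  assumes G: "graph inc VG EG" and pos: "\<forall>e\<in>EG. l e > 0"
    and H: "subgraph inc VH EH VG EG"
    and short: "short_connector inc l k VG EG VH EH A VT ET"
    and minimal: "\<And>A' V' E'. short_connector inc l k VG EG VH EH A' V' E' \<Longrightarrow>
      V' \<subseteq> VT \<Longrightarrow> E' \<subseteq> ET \<Longrightarrow> V' = VT \<and> E' = ET"
begin

lemma A_sub_VH: "A \<subseteq> VH" and card_A: "card A \<le> k" and T_sub_G: "subgraph inc VT ET VG EG"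
  and T_connected: "connected_graph inc VT ET" and A_sub_VT: "A \<subseteq> VT"
  and T_short: "ereal (glen l ET) < sd inc l VH EH A"
  using short by (simp_all add: short_connector_def)

lemma T_graph: "graph inc VT ET"
  using G T_sub_G by (rule graph_subgraph)

lemma T_pos: "\<forall>f\<in>ET. l f > 0"
  using T_sub_G pos by (auto simp: subgraph_def)

lemma finite_A: "finite A"
  using A_sub_VT T_graph by (simp add: graph_def finite_subset)

lemma H_finite: "finite VH" "finite EH"
  using graph_subgraph[OF G H] by (simp_all add: graph_def)

lemma H_nonneg: "\<forall>f\<in>EH. l f \<ge> 0"
  using H pos by (force simp: subgraph_def)

lemma glen_le_T: "E' \<subseteq> ET \<Longrightarrow> glen l E' \<le> glen l ET"
  using T_graph T_pos by (intro glen_mono) (auto simp: graph_def less_imp_le)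

lemma sd_H_le_proper_part:
  assumes "V' \<subseteq> VT" "E' \<subseteq> ET" "V' \<noteq> VT \<or> E' \<noteq> ET" "\<forall>f\<in>E'. inc f \<subseteq> V'"
    "connected_graph inc V' E'" "A' \<subseteq> VH" "A' \<subseteq> V'" "card A' \<le> k"
  shows "sd inc l VH EH A' \<le> ereal (glen l E')"
proof (rule ccontr)
  assume "\<not> ?thesis"
  moreover have "subgraph inc V' E' VG EG" using assms(1,2,4) T_sub_G by (auto simp: subgraph_def)
  ultimately have "short_connector inc l k VG EG VH EH A' V' E'"
    using assms(5-8) by (simp add: short_connector_def)
  then show False using minimal assms(1-3) by blast
qed

lemma proper_part_not_spanning:
  assumes "V' \<subseteq> VT" "E' \<subseteq> ET" "V' \<noteq> VT \<or> E' \<noteq> ET" "\<forall>f\<in>E'. inc f \<subseteq> V'"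
    "connected_graph inc V' E'"
  shows "\<not> A \<subseteq> V'"
proof
  assume "A \<subseteq> V'"
  then have "sd inc l VH EH A \<le> ereal (glen l E')"
    using sd_H_le_proper_part[OF assms] A_sub_VH card_A by blast
  also have "\<dots> \<le> ereal (glen l ET)" using glen_le_T assms(2) by simp
  finally show False using T_short by simp
qed

lemma T_tree: "is_tree inc VT ET"
  unfolding is_tree_def
proof (intro conjI ballI notI T_connected)
  fix e assume "e \<in> ET" "connected_graph inc VT (ET - {e})"
  then show False
    using proper_part_not_spanning[of VT "ET - {e}"] A_sub_VT T_graph by (auto simp: graph_def)
qed

lemma leaves_subset_A: "leaves inc VT ET \<subseteq> A"
proof
  fix v assume v: "v \<in> leaves inc VT ET"
  obtain e where "e \<in> ET" "connected_graph inc (VT - {v}) (ET - {e})"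
    "\<forall>f\<in>ET - {e}. inc f \<subseteq> VT - {v}"
    by (rule tree_remove_leaf[OF T_graph T_tree v])
  moreover have "v \<in> VT" using v by (simp add: leaves_def)
  ultimately have "\<not> A \<subseteq> VT - {v}" by (intro proper_part_not_spanning) auto
  then show "v \<in> A" using A_sub_VT by blast
qed

text \<open>If T splits at a vertex v of H into two proper connected parts, then the Steiner trees in H
of the terminals of each part together with v combine into a connection of A in H that is no
longer than T.\<close>

lemma split_vertex_not_in_H:
  assumes "V1 \<union> V2 = VT" "E1 \<union> E2 = ET" "E1 \<inter> E2 = {}" "E1 \<noteq> {}" "E2 \<noteq> {}"
    "connected_graph inc V1 E1" "connected_graph inc V2 E2"
    "\<forall>f\<in>E1. inc f \<subseteq> V1" "\<forall>f\<in>E2. inc f \<subseteq> V2" "v \<in> V1" "v \<in> V2"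
  shows "v \<notin> VH"
proof
  assume vH: "v \<in> VH"
  have part: "sd inc l VH EH (insert v (A \<inter> Vi)) \<le> ereal (glen l Ei)"
    if "Vi \<subseteq> VT" "Ei \<subseteq> ET" "Ei \<noteq> ET" "\<forall>f\<in>Ei. inc f \<subseteq> Vi" "connected_graph inc Vi Ei" "v \<in> Vi"
    for Vi Ei
  proof (rule sd_H_le_proper_part)
    have "\<not> A \<subseteq> Vi" using proper_part_not_spanning that(1-5) by blast
    then show "card (insert v (A \<inter> Vi)) \<le> k"
      using card_insert_Int_le[OF finite_A] card_A le_trans by blast
  qed (use that vH A_sub_VH in auto)
  have sd1: "sd inc l VH EH (insert v (A \<inter> V1)) \<le> ereal (glen l E1)"
    by (rule part) (use assms in auto)
  have sd2: "sd inc l VH EH (insert v (A \<inter> V2)) \<le> ereal (glen l E2)"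
    by (rule part) (use assms in auto)
  have sum_ET: "glen l E1 + glen l E2 = glen l ET"
    using assms(2,3) T_graph unfolding glen_def graph_def by (metis finite_Un sum.union_disjoint)
  have "sd inc l VH EH A \<le> sd inc l VH EH (insert v (A \<inter> V1) \<union> insert v (A \<inter> V2))"
    by (rule sd_mono) (use A_sub_VT assms(1) in blast)
  also have "\<dots> \<le> ereal (glen l E1 + glen l E2)"
    by (rule sd_Un_le[OF H_finite H_nonneg sd1 sd2]) simp
  also have "\<dots> = ereal (glen l ET)" using sum_ET by simp
  finally show False using T_short by simp
qed

lemma common_vertex_is_leaf:
  assumes vT: "v \<in> VT" and vH: "v \<in> VH"
  shows "v \<in> leaves inc VT ET"
proof (rule ccontr)
  assume "v \<notin> leaves inc VT ET"
  then have "card {f\<in>ET. v \<in> inc f} \<noteq> 1" using vT by (simp add: leaves_def)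
  then consider "card {f\<in>ET. v \<in> inc f} = 0" | "card {f\<in>ET. v \<in> inc f} \<ge> 2" by linarith
  then show False
  proof cases
    case 1
    then have "\<forall>f\<in>ET. v \<notin> inc f" using T_graph by (simp add: graph_def)
    then have VT: "VT = {v}" and ET: "ET = {}"
      using connected_isolated_vertex[OF T_graph T_connected vT] by auto
    have "subgraph inc {v} {} VH EH" "connected_graph inc {v} {}"
      using vH by (simp_all add: subgraph_def connected_graph_def)
    then have "sd inc l VH EH A \<le> ereal (glen l {})"
      using A_sub_VT VT by (intro sd_le_glen) auto
    then show False using T_short ET by simp
  next
    case 2
    obtain V1 E1 V2 E2 where "V1 \<union> V2 = VT" "E1 \<union> E2 = ET" "E1 \<inter> E2 = {}" "E1 \<noteq> {}" "E2 \<noteq> {}"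
      "connected_graph inc V1 E1" "connected_graph inc V2 E2"
      "\<forall>f\<in>E1. inc f \<subseteq> V1" "\<forall>f\<in>E2. inc f \<subseteq> V2" "v \<in> V1" "v \<in> V2"
      by (rule tree_split_at_vertex[OF T_graph T_tree 2])
    then have "v \<notin> VH" by (rule split_vertex_not_in_H)
    then show False using vH by contradiction
  qed
qed

lemma leaves_eq_A: "leaves inc VT ET = A"
  using leaves_subset_A common_vertex_is_leaf A_sub_VT A_sub_VH by blast

lemma T_inter_H_vertices: "VT \<inter> VH = leaves inc VT ET"
  using common_vertex_is_leaf leaves_eq_A A_sub_VT A_sub_VH by blast

lemma T_inter_H_edges: "ET \<inter> EH = {}"
proof (rule ccontr)
  assume "ET \<inter> EH \<noteq> {}"
  then obtain e where eT: "e \<in> ET" and eH: "e \<in> EH" by blast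
  have "inc e \<subseteq> VT" "inc e \<subseteq> VH" using T_graph eT H eH by (auto simp: graph_def subgraph_def)
  then have "inc e \<subseteq> leaves inc VT ET" using common_vertex_is_leaf by blast
  then have VT: "VT = inc e" and ET: "ET = {e}"
    using tree_edge_between_leaves[OF T_graph T_tree eT] by simp_all
  have "subgraph inc (inc e) {e} VH EH" using \<open>inc e \<subseteq> VH\<close> eH by (simp add: subgraph_def)
  then have "sd inc l VH EH A \<le> ereal (glen l {e})"
    using T_connected A_sub_VT unfolding VT ET by (rule sd_le_glen)
  then show False using T_short ET by simp
qed

lemma sd_H_le_sd_T:
  assumes B: "B \<subset> leaves inc VT ET"
  shows "sd inc l VH EH B \<le> sd inc l VT ET B"
proof -
  obtain a where a: "a \<in> leaves inc VT ET" "a \<notin> B" using B by blast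
  obtain e where e: "e \<in> ET" "connected_graph inc (VT - {a}) (ET - {e})"
    "\<forall>f\<in>ET - {e}. inc f \<subseteq> VT - {a}"
    by (rule tree_remove_leaf[OF T_graph T_tree a(1)])
  have "subgraph inc (VT - {a}) (ET - {e}) VT ET" using e(3) by (auto simp: subgraph_def)
  then have sd_T_less: "sd inc l VT ET B \<le> ereal (glen l (ET - {e}))"
    using B a leaves_eq_A A_sub_VT by (intro sd_le_glen[OF _ e(2)]) auto
  have "glen l ET = l e + glen l (ET - {e})"
    using T_graph e(1) unfolding glen_def graph_def by (simp add: sum.remove)
  then have shorter: "glen l (ET - {e}) < glen l ET" using T_pos e(1) by simp
  have "sd inc l VT ET B \<noteq> \<infinity>" using sd_T_less by auto
  then obtain V' E' where S: "subgraph inc V' E' VT ET" "connected_graph inc V' E'" "B \<subseteq> V'"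
    "sd inc l VT ET B = ereal (glen l E')"
    using T_graph by (auto simp: graph_def elim: sd_attained)
  have "E' \<noteq> ET" using S(4) sd_T_less shorter by auto
  moreover have "card B \<le> k" using B leaves_eq_A finite_A card_A by (metis card_mono le_trans less_imp_le)
  ultimately have "sd inc l VH EH B \<le> ereal (glen l E')"
    using S B leaves_eq_A A_sub_VH by (intro sd_H_le_proper_part) (auto simp: subgraph_def)
  then show ?thesis using S(4) by simp
qed

lemma T_shortcut_tree: "shortcut_tree inc l VT ET VH EH"
  unfolding shortcut_tree_def
  using T_tree T_inter_H_vertices T_inter_H_edges T_short leaves_eq_A sd_H_le_sd_T by simp

end

theorem lemma3p1:
  fixes inc :: "'e \<Rightarrow> 'v set" and l :: "'e \<Rightarrow> real" and k :: nat
    and VG VH :: "'v set" and EG EH :: "'e set"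
  assumes "graph inc VG EG"
    and "\<forall>e\<in>EG. l e > 0"
    and "subgraph inc VH EH VG EG"
    and "\<not> k_geodesic inc l k VH EH VG EG"
  shows "\<exists>VT ET. subgraph inc VT ET VG EG \<and> is_tree inc VT ET \<and>
           card (leaves inc VT ET) \<le> k \<and> shortcut_tree inc l VT ET VH EH"
proof -
  obtain A0 V0 E0 where "short_connector inc l k VG EG VH EH A0 V0 E0"
    using short_connector_if_not_k_geodesic[OF assms(3,4)] .
  then obtain A VT ET where "minimal_short_connector inc l k VG VH VT A EG EH ET"
    using ex_minimal_short_connector[OF assms(1)] assms unfolding minimal_short_connector_def by metis
  then interpret T: minimal_short_connector inc l k VG VH VT A EG EH ET .
  show ?thesis
    using T.T_sub_G T.T_tree T.card_A T.leaves_eq_A T.T_shortcut_tree by auto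
qed

end
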